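(* Let $\Omega>0$, $c_{\max}>0$, and let $x:\mathbb{R}\to\mathbb{R}$ be a $2\Omega$-bandlimited, $c_{\max}$-bounded signal with finite energy. Suppose $x$ is sampled by an AIF-TEM with parameters $\kappa>0$, $\delta>0$, window size $w\ge 1$, margin $\beta>0$ and a successfully operating MAP block, producing firing times $t_0<t_1<\dots<t_N$, biases $b_1,\dots,b_N$ and local maximal amplitudes $c_1,\dots,c_N$. Then the average oversampling $OS_a$ satisfies $$OS_{a}\le \frac{\mathbb{E}[b_n]+\mathbb{E}[c_n]}{\kappa\delta}\,\frac{\pi}{\Omega}\le \frac{\mathbb{E}[b_n]+c_{\max}}{\kappa\delta}\,\frac{\pi}{\Omega}.$$
   Context: A signal $x$ is $2\Omega$-bandlimited if its Fourier transform vanishes outside $[-\Omega,\Omega]$; it is $c_{\max}$-bounded if $|x(t)|\le c_{\max}$ for all $t$; it has finite energy if $\int_{-\infty}^\infty |x(t)|^2dt<\infty$. An AIF-TEM (adaptive integrate-and-fire time encoding machine) with parameters $\kappa,\delta>0$ and window size $w$ produces a strictly increasing sequence of firing times $t_n$ and biases $b_n>0$ such that for each $n$, $\frac1\kappa\int_{t_{n-1}}^{t_n}(x(s)+b_n)\,ds=\delta$. The local maximal amplitude is $c_n=\max_{t_{n-w}\le t\le t_n}|x(t)|$. The MAP block operates successfully (with margin $\beta>0$) if $b_n\ge c_n+\beta$ for all $n$. Write $T_n=t_n-t_{n-1}$. $\mathbb{E}[\cdot]$ denotes the average over the sample indices $n=1,\dots,N$. The average sampling frequency is $f_s=1/\mathbb{E}[T_n]$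 and the average oversampling is $OS_a=f_s\cdot\frac{\pi}{\Omega}$. *)

theory Defs
  imports "HOL-Analysis.Analysis"
begin

text \<open>2\<Omega>-bandlimited: the Fourier transform X of x vanishes outside [-\<Omega>,\<Omega>],
  i.e. x is the inverse Fourier transform of an (integrable) spectrum supported on [-\<Omega>,\<Omega>].\<close>
definition bandlimited :: "real \<Rightarrow> (real \<Rightarrow> real) \<Rightarrow> bool" where
  "bandlimited \<Omega> x \<longleftrightarrow>
     (\<exists>X :: real \<Rightarrow> complex. X absolutely_integrable_on {-\<Omega>..\<Omega>} \<and>
        (\<forall>t. complex_of_real (x t) =
              integral {-\<Omega>..\<Omega>} (\<lambda>\<omega>. X \<omega> * exp (\<i> * complex_of_real (\<omega> * t))) / (2 * complex_of_real pi)))"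

definition bounded_by :: "real \<Rightarrow> (real \<Rightarrow> real) \<Rightarrow> bool" where
  "bounded_by cmax x \<longleftrightarrow> (\<forall>t. \<bar>x t\<bar> \<le> cmax)"

definition finite_energy :: "(real \<Rightarrow> real) \<Rightarrow> bool" where
  "finite_energy x \<longleftrightarrow> x \<in> borel_measurable lborel \<and> integrable lborel (\<lambda>t. (x t)\<^sup>2)"

text \<open>Local maximal amplitude c_n = max over [t_{n-w}, t_n] of |x|
  (indices below 0 are truncated to 0, i.e. the window starts at t_0).\<close>
definition local_max_amp :: "(real \<Rightarrow> real) \<Rightarrow> (nat \<Rightarrow> real) \<Rightarrow> nat \<Rightarrow> nat \<Rightarrow> real" where
  "local_max_amp x t w n = (SUP s\<in>{t (n - w)..t n}. \<bar>x s\<bar>)"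

definition avg :: "nat \<Rightarrow> (nat \<Rightarrow> real) \<Rightarrow> real" where
  "avg N f = (\<Sum>n=1..N. f n) / real N"

definition avg_oversampling :: "nat \<Rightarrow> (nat \<Rightarrow> real) \<Rightarrow> real \<Rightarrow> real" where
  "avg_oversampling N t \<Omega> = (1 / avg N (\<lambda>n. t n - t (n - 1))) * (pi / \<Omega>)"

end

theory Submission
  imports Defs
begin

text \<open>On the firing interval \<open>[t\<^sub>n\<^sub>-\<^sub>1, t\<^sub>n]\<close> the integrand \<open>x + b\<^sub>n\<close> is at most
  \<open>b\<^sub>n + c\<^sub>n\<close>, so \<open>\<kappa>\<delta> \<le> T\<^sub>n (b\<^sub>n + c\<^sub>n)\<close>. By Cauchy-Schwarz, pointwise bounds
  \<open>\<kappa>\<delta> \<le> T\<^sub>n a\<^sub>n\<close> give \<open>N\<^sup>2 \<kappa>\<delta> \<le> (\<Sum> T\<^sub>n)(\<Sum> a\<^sub>n)\<close>, i.e. \<open>1 / \<bbbE>[T\<^sub>n] \<le> \<bbbE>[a\<^sub>n] / \<kappa>\<delta>\<close>;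
  this is the first inequality, and the second is \<open>c\<^sub>n \<le> cmax\<close>.\<close>

lemma card_sq_mult_le_sum_mult_sum:
  fixes u v :: "'a \<Rightarrow> real"
  assumes "finite A" and "0 \<le> k"
    and "\<And>i. i \<in> A \<Longrightarrow> 0 \<le> u i" and "\<And>i. i \<in> A \<Longrightarrow> 0 \<le> v i"
    and "\<And>i. i \<in> A \<Longrightarrow> k \<le> u i * v i"
  shows "real (card A) ^ 2 * k \<le> sum u A * sum v A"
proof -
  have "real (card A) * sqrt k = (\<Sum>i\<in>A. sqrt k)"
    by simp
  also have "\<dots> \<le> (\<Sum>i\<in>A. sqrt (u i) * sqrt (v i))"
    using assms(5) by (intro sum_mono) (simp add: real_sqrt_mult[symmetric])
  finally have "(real (card A) * sqrt k)\<^sup>2 \<le> (\<Sum>i\<in>A. sqrt (u i) * sqrt (v i))\<^sup>2"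
    using assms(2) by (intro power_mono) auto
  also have "\<dots> \<le> (\<Sum>i\<in>A. (sqrt (u i))\<^sup>2) * (\<Sum>i\<in>A. (sqrt (v i))\<^sup>2)"
    by (rule Cauchy_Schwarz_ineq_sum)
  also have "\<dots> = sum u A * sum v A"
    using assms(3,4) by simp
  finally show ?thesis
    using assms(2) by (simp add: power_mult_distrib)
qed

lemma avg_add: "avg N (\<lambda>n. f n + g n) = avg N f + avg N g"
  unfolding avg_def by (simp add: sum.distrib add_divide_distrib)

lemma avg_le_const:
  assumes "N \<ge> 1" and "\<And>n. 1 \<le> n \<Longrightarrow> n \<le> N \<Longrightarrow> f n \<le> c"
  shows "avg N f \<le> c"
proof -
  have "(\<Sum>n=1..N. f n) \<le> (\<Sum>n=1..N. c)"
    using assms(2) by (intro sum_mono) auto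
  then show ?thesis
    using assms(1) by (simp add: avg_def field_simps)
qed

lemma inverse_avg_le_avg_div:
  assumes "N \<ge> 1" and "0 < k"
    and "\<And>n. 1 \<le> n \<Longrightarrow> n \<le> N \<Longrightarrow> 0 < T n"
    and "\<And>n. 1 \<le> n \<Longrightarrow> n \<le> N \<Longrightarrow> k \<le> T n * a n"
  shows "1 / avg N T \<le> avg N a / k"
proof -
  have a_pos: "0 < a n" if "1 \<le> n" "n \<le> N" for n
    using assms(2) assms(3,4)[OF that] by (meson less_le_trans zero_less_mult_pos)
  have "real N ^ 2 * k \<le> (\<Sum>n=1..N. T n) * (\<Sum>n=1..N. a n)"
    using card_sq_mult_le_sum_mult_sum[of "{1..N}" k T a] assms a_pos
    by (auto intro: less_imp_le)
  moreover have "0 < (\<Sum>n=1..N. T n)"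
    using assms(1,3) by (intro sum_pos) auto
  ultimately show ?thesis
    using assms(1,2) by (simp add: avg_def field_simps power2_eq_square)
qed

lemma integral_plus_const_le:
  fixes f :: "real \<Rightarrow> real"
  assumes "l \<le> u" and "(\<lambda>s. f s + b) integrable_on {l..u}"
    and "\<And>s. s \<in> {l..u} \<Longrightarrow> \<bar>f s\<bar> \<le> c"
  shows "integral {l..u} (\<lambda>s. f s + b) \<le> (u - l) * (b + c)"
proof -
  have "integral {l..u} (\<lambda>s. f s + b) \<le> integral {l..u} (\<lambda>s. b + c)"
    using assms(2,3) by (intro integral_le) (auto simp: abs_le_iff)
  then show ?thesis
    using assms(1) by simp
qed

lemma threshold_le_interval_mult_amplitude:
  fixes x :: "real \<Rightarrow> real"
  assumes "0 < \<kappa>" and "0 < \<delta>" and "l \<le> u"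
    and "(1 / \<kappa>) * integral {l..u} (\<lambda>s. x s + b) = \<delta>"
    and "\<And>s. s \<in> {l..u} \<Longrightarrow> \<bar>x s\<bar> \<le> c"
  shows "\<kappa> * \<delta> \<le> (u - l) * (b + c)"
proof -
  have I: "integral {l..u} (\<lambda>s. x s + b) = \<kappa> * \<delta>"
    using assms(1,4) by (simp add: field_simps)
  \<comment> \<open>a non-integrable function has integral 0, which the firing equation rules out\<close>
  then have "(\<lambda>s. x s + b) integrable_on {l..u}"
    using assms(1,2) not_integrable_integral by fastforce
  from integral_plus_const_le[OF assms(3) this assms(5)] show ?thesis
    using I by simp
qed

lemma lift_Suc_mono_le_upto:
  fixes t :: "nat \<Rightarrow> 'a::order"
  assumes "\<And>n. n < N \<Longrightarrow> t n < t (Suc n)" and "i \<le> j" and "j \<le> N"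
  shows "t i \<le> t j"
proof (rule lift_Suc_mono_le_ivl[of "{..<N}"])
  show "t n \<le> t (Suc n)" if "n \<in> {..<N}" for n
    using assms(1) that by (simp add: less_imp_le)
qed (use assms(2,3) in auto)

lemma abs_le_local_max_amp:
  assumes "bounded_by cmax x" and "s \<in> {t (n - w)..t n}"
  shows "\<bar>x s\<bar> \<le> local_max_amp x t w n"
  unfolding local_max_amp_def
  using assms by (intro cSUP_upper bdd_aboveI[where M = cmax]) (auto simp: bounded_by_def)

lemma local_max_amp_le:
  assumes "bounded_by cmax x" and "t (n - w) \<le> t n"
  shows "local_max_amp x t w n \<le> cmax"
  unfolding local_max_amp_def
  using assms by (intro cSUP_least) (auto simp: bounded_by_def)

theorem theorem1:
  fixes x :: "real \<Rightarrow> real" and t b :: "nat \<Rightarrow> real"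
    and \<Omega> cmax \<kappa> \<delta> \<beta> :: real and w N :: nat
  assumes "\<Omega> > 0" and "cmax > 0"
    and "bandlimited \<Omega> x" and "bounded_by cmax x" and "finite_energy x"
    and "\<kappa> > 0" and "\<delta> > 0" and "w \<ge> 1" and "\<beta> > 0" and "N \<ge> 1"
    and "\<And>n. n < N \<Longrightarrow> t n < t (Suc n)"
    and "\<And>n. 1 \<le> n \<Longrightarrow> n \<le> N \<Longrightarrow> b n > 0"
    and "\<And>n. 1 \<le> n \<Longrightarrow> n \<le> N \<Longrightarrow>
           (1 / \<kappa>) * integral {t (n - 1)..t n} (\<lambda>s. x s + b n) = \<delta>"
    and "\<And>n. 1 \<le> n \<Longrightarrow> n \<le> N \<Longrightarrow> b n \<ge> local_max_amp x t w n + \<beta>"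
  shows "avg_oversampling N t \<Omega>
           \<le> (avg N b + avg N (local_max_amp x t w)) / (\<kappa> * \<delta>) * (pi / \<Omega>)
       \<and> (avg N b + avg N (local_max_amp x t w)) / (\<kappa> * \<delta>) * (pi / \<Omega>)
           \<le> (avg N b + cmax) / (\<kappa> * \<delta>) * (pi / \<Omega>)"
proof -
  let ?T = "\<lambda>n. t n - t (n - 1)" and ?c = "local_max_amp x t w"
  have T_pos: "0 < ?T n" if "1 \<le> n" "n \<le> N" for n
    using that assms(11)[of "n - 1"] by simp
  have window: "t (n - w) \<le> t (n - 1)" if "n \<le> N" for n
    using that assms(8) by (intro lift_Suc_mono_le_upto[of N t, OF assms(11)]) auto
  have amp: "\<bar>x s\<bar> \<le> ?c n" if "n \<le> N" "s \<in> {t (n - 1)..t n}" for n s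
    using abs_le_local_max_amp[OF assms(4)] window[OF that(1)] that(2) by simp
  have "\<kappa> * \<delta> \<le> ?T n * (b n + ?c n)" if "1 \<le> n" "n \<le> N" for n
    using threshold_le_interval_mult_amplitude[OF assms(6,7) _ assms(13)[OF that] amp[OF that(2)]]
      T_pos[OF that] by simp
  then have "1 / avg N ?T \<le> avg N (\<lambda>n. b n + ?c n) / (\<kappa> * \<delta>)"
    using T_pos assms(6,7,10) by (intro inverse_avg_le_avg_div) auto
  then have first: "1 / avg N ?T \<le> (avg N b + avg N ?c) / (\<kappa> * \<delta>)"
    by (simp only: avg_add)
  have "avg N ?c \<le> cmax"
  proof (rule avg_le_const[OF assms(10)])
    fix n assume "1 \<le> n" "n \<le> N"
    then have "t (n - w) \<le> t n"
      using window T_pos by (meson diff_gt_0_iff_gt less_imp_le order_trans)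
    then show "?c n \<le> cmax"
      by (rule local_max_amp_le[OF assms(4)])
  qed
  then have second: "(avg N b + avg N ?c) / (\<kappa> * \<delta>) \<le> (avg N b + cmax) / (\<kappa> * \<delta>)"
    using assms(6,7) by (intro divide_right_mono) auto
  have "0 \<le> pi / \<Omega>"
    using assms(1) by simp
  from mult_right_mono[OF first this] mult_right_mono[OF second this] show ?thesis
    unfolding avg_oversampling_def by blast
qed

end
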